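(* There is an absolute constant $c>0$ such that for infinitely many $d$ there exists a high-multiplicity Bin Packing instance with $d$ item types (sizes $s_1,\dots,s_d$, multiplicities $a_1,\dots,a_d\in\mathbb{Z}_{\ge 0}$, bin capacity $C$) for which every optimal solution $x$ of its configuration ILP satisfies $|\operatorname{supp}(x)|\ge 2^{cd}$, i.e. $|\operatorname{supp}(x)|\in 2^{\Omega(d)}$. More concretely, for every integer $d'\ge 1$ there is such an instance with $d=12d'+4$ item types in which every optimal solution uses at least $2^{d'}-1$ pairwise distinct configurations.
   Context: High-multiplicity Bin Packing: given $d$ item types with sizes $s_i$, amounts $a_i\in\mathbb{Z}_{\ge0}$ and a bin capacity $C$, pack all items into as few bins as possible so that every bin has total size at most $C$. A configuration is a vector $p\in\mathbb{Z}^d_{\ge 0}$ with $s^Tp\le C$ (a feasible filling of one bin); let $\mathcal{C}$ be the set of all configurations. The configuration ILP is $\min\{\mathbf{1}^Tx : \sum_{p\in\mathcal{C}} x_p\, p = a,\ x\in\mathbb{Z}^{\mathcal{C}}_{\ge0}\}$, where $x_p$ is the number of bins filled with configuration $p$. The support of a vector $x$ is $\operatorname{supp}(x)=\{p: x_p\neq 0\}$. *)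

theory Defs
  imports Complex_Main
begin

text \<open>High-multiplicity bin packing with d item types indexed by 0..<d.
  Sizes s, amounts a are functions nat => nat (only indices < d matter),
  C is the bin capacity.\<close>

definition is_config :: "nat \<Rightarrow> (nat \<Rightarrow> nat) \<Rightarrow> nat \<Rightarrow> (nat \<Rightarrow> nat) \<Rightarrow> bool" where
  "is_config d s C p \<longleftrightarrow> (\<forall>i\<ge>d. p i = 0) \<and> (\<Sum>i<d. s i * p i) \<le> C"

definition supp :: "((nat \<Rightarrow> nat) \<Rightarrow> nat) \<Rightarrow> (nat \<Rightarrow> nat) set" where
  "supp x = {p. x p \<noteq> 0}"

definition ilp_feasible ::
  "nat \<Rightarrow> (nat \<Rightarrow> nat) \<Rightarrow> (nat \<Rightarrow> nat) \<Rightarrow> nat \<Rightarrow> ((nat \<Rightarrow> nat) \<Rightarrow> nat) \<Rightarrow> bool" where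
  "ilp_feasible d s a C x \<longleftrightarrow>
     finite (supp x) \<and> (\<forall>p\<in>supp x. is_config d s C p) \<and>
     (\<forall>i<d. (\<Sum>p\<in>supp x. x p * p i) = a i)"

definition ilp_value :: "((nat \<Rightarrow> nat) \<Rightarrow> nat) \<Rightarrow> nat" where
  "ilp_value x = (\<Sum>p\<in>supp x. x p)"

definition ilp_optimal ::
  "nat \<Rightarrow> (nat \<Rightarrow> nat) \<Rightarrow> (nat \<Rightarrow> nat) \<Rightarrow> nat \<Rightarrow> ((nat \<Rightarrow> nat) \<Rightarrow> nat) \<Rightarrow> bool" where
  "ilp_optimal d s a C x \<longleftrightarrow> ilp_feasible d s a C x \<and>
     (\<forall>y. ilp_feasible d s a C y \<longrightarrow> ilp_value x \<le> ilp_value y)"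

definition valid_instance :: "nat \<Rightarrow> (nat \<Rightarrow> nat) \<Rightarrow> (nat \<Rightarrow> nat) \<Rightarrow> nat \<Rightarrow> bool" where
  "valid_instance d s a C \<longleftrightarrow> (\<forall>i<d. 0 < s i \<and> s i \<le> C) \<and> (\<exists>x. ilp_optimal d s a C x)"

end

theory Submission
  imports Defs
begin

(* Choose a base B so large that no carries occur, give item i the size \<Sum>k \<alpha>(k,i) B^k and
   the bins the capacity \<Sum>k c(k) B^k; then a configuration below the amount vector fills a
   bin exactly iff it solves the linear system \<alpha> p = c. The system used here has n levels;
   level j multiplies z(j) = y(j) + y'(j) by 2^(2^j) exactly when its bit variable is 1, so every
   solution has z(n) = 2^e for some e. The amounts are the sum of 2^n solutions, one for each
   e < 2^n, so their total size is exactly 2^n full bins and an optimal solution must fill 2^n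
   bins exactly, each with a solution of the system. Its z(n)-items then add up to
   2^(2^n) - 1 = \<Sum>e<2^n. 2^e, and a sum of only 2^n powers of two can equal this number only
   if the powers are distinct: the 2^n bins have pairwise different configurations.
   The remaining item types, up to 12n+4, have size 1 and amount 0. *)

section \<open>Base expansions and sums of powers of two\<close>

lemma sum_pow2_lessThan: "(\<Sum>i<n. 2 ^ i) = (2::nat) ^ n - 1"
  using mask_eq_sum_exp_nat[of n] by (simp add: lessThan_def)

lemma base_expansion_less:
  fixes u :: "nat \<Rightarrow> nat"
  assumes "\<forall>k<K. u k < B"
  shows "(\<Sum>k<K. u k * B ^ k) < B ^ K"
  using assms
proof (induction K)
  case (Suc K)
  have "(\<Sum>k<Suc K. u k * B ^ k) < (u K + 1) * B ^ K"
    using Suc by simp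
  also have "\<dots> \<le> B * B ^ K"
    using Suc.prems by (intro mult_right_mono) auto
  finally show ?case by simp
qed simp

lemma base_expansion_inject:
  fixes u w :: "nat \<Rightarrow> nat"
  assumes "\<forall>k<K. u k < B" "\<forall>k<K. w k < B"
    and "(\<Sum>k<K. u k * B ^ k) = (\<Sum>k<K. w k * B ^ k)"
  shows "\<forall>k<K. u k = w k"
  using assms
proof (induction K)
  case (Suc K)
  have low: "(\<Sum>k<K. u k * B ^ k) < B ^ K" "(\<Sum>k<K. w k * B ^ k) < B ^ K"
    using Suc.prems(1,2) by (auto intro: base_expansion_less)
  have top: "(\<Sum>k<Suc K. f k * B ^ k) div B ^ K = f K" if "(\<Sum>k<K. f k * B ^ k) < B ^ K" for f
    using that by (simp add: div_mult_self1[OF gr_implies_not0])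
  have "u K = w K"
    using top[OF low(1)] top[OF low(2)] Suc.prems(3) by simp
  with Suc show ?case
    by (auto simp: less_Suc_eq)
qed simp

lemma pow2_mod_double_pow2:
  "(2::nat) ^ (v mod (2 * 2^j)) = 2 ^ (v mod 2^j) * (2^2^j) ^ (v div 2^j mod 2)"
  using mod_mult2_eq[of v "2^j" 2] by (simp add: power_add power_mult mult.commute)

lemma pow2_mod_pow2_le:
  assumes "j \<le> n"
  shows "(2::nat) ^ (v mod 2^j) \<le> 2^2^n"
proof -
  have "v mod 2^j < 2^j"
    by simp
  also have "(2::nat)^j \<le> 2^n"
    using assms by (simp add: power_increasing)
  finally show ?thesis
    by simp
qed

(* c 0 is odd; the surplus pairs of 2^0 are carried into position 1 while the rest shifts down. *)
lemma pow2_mask_halve: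
  fixes c :: "nat \<Rightarrow> nat"
  assumes "(\<Sum>e<M. c e * 2 ^ e) = 2 ^ Suc N - 1"
  obtains h c' where "c 0 = 2 * h + 1" "(\<Sum>e<M. c' e * 2 ^ e) = 2 ^ N - 1"
    "(\<Sum>e<M. c e) = (\<Sum>e<M. c' e) + h + 1" "\<forall>e. Suc e < M \<longrightarrow> c (Suc e) \<le> c' e"
proof -
  have "M \<noteq> 0"
    using assms by (intro notI) (simp add: le_Suc_eq)
  then obtain M' where M: "M = Suc M'"
    using not0_implies_Suc by blast
  have split: "(\<Sum>e<M. c e * 2 ^ e) = c 0 + 2 * (\<Sum>e<M'. c (Suc e) * 2 ^ e)"
    unfolding M sum.lessThan_Suc_shift by (simp add: sum_distrib_left mult_ac)
  moreover have "odd ((2::nat) ^ Suc N - 1)"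
    by simp
  ultimately have "odd (c 0)"
    using assms by simp
  then obtain h where h: "c 0 = 2 * h + 1"
    using oddE by blast
  define c' where "c' e = (if e < M' then c (Suc e) else 0) + (if e = 0 then h else 0)" for e
  have "(\<Sum>e<M. c' e * 2 ^ e) = (\<Sum>e<M'. c (Suc e) * 2 ^ e) + h"
    by (simp add: M c'_def distrib_right sum.distrib if_distrib[of "\<lambda>t. t * _"] cong: if_cong)
  then have "(\<Sum>e<M. c' e * 2 ^ e) = 2 ^ N - 1"
    using assms split h by simp
  moreover have "(\<Sum>e<M. c e) = (\<Sum>e<M. c' e) + h + 1"
  proof -
    have "(\<Sum>e<M. c' e) = (\<Sum>e<M'. c (Suc e)) + h"
      by (simp add: M c'_def sum.distrib cong: if_cong)
    moreover have "(\<Sum>e<M. c e) = c 0 + (\<Sum>e<M'. c (Suc e))"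
      by (simp only: M sum.lessThan_Suc_shift)
    ultimately show ?thesis
      using h by simp
  qed
  moreover have "\<forall>e. Suc e < M \<longrightarrow> c (Suc e) \<le> c' e"
    by (simp add: M c'_def)
  ultimately show thesis
    using that h by blast
qed

lemma pow2_mask_terms_ge:
  fixes c :: "nat \<Rightarrow> nat"
  assumes "(\<Sum>e<M. c e * 2 ^ e) = 2 ^ N - 1"
  shows "N \<le> (\<Sum>e<M. c e)"
  using assms
proof (induction N arbitrary: c)
  case (Suc N)
  obtain h c' where "(\<Sum>e<M. c' e * 2 ^ e) = 2 ^ N - 1" "(\<Sum>e<M. c e) = (\<Sum>e<M. c' e) + h + 1"
    using pow2_mask_halve[OF Suc.prems] .
  with Suc.IH show ?case
    by fastforce
qed simp

lemma pow2_mask_terms_le_1: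
  fixes c :: "nat \<Rightarrow> nat"
  assumes "(\<Sum>e<M. c e * 2 ^ e) = 2 ^ N - 1" "(\<Sum>e<M. c e) \<le> N" "e < M"
  shows "c e \<le> 1"
  using assms
proof (induction N arbitrary: c e)
  case 0
  then show ?case
    by simp
next
  case (Suc N)
  obtain h c' where h: "c 0 = 2 * h + 1" and c': "(\<Sum>e<M. c' e * 2 ^ e) = 2 ^ N - 1"
    and count: "(\<Sum>e<M. c e) = (\<Sum>e<M. c' e) + h + 1"
    and shift: "\<forall>e. Suc e < M \<longrightarrow> c (Suc e) \<le> c' e"
    using pow2_mask_halve[OF Suc.prems(1)] .
  have "N \<le> (\<Sum>e<M. c' e)"
    using pow2_mask_terms_ge[OF c'] .
  then have "h = 0" "(\<Sum>e<M. c' e) \<le> N"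
    using count Suc.prems(2) by auto
  show ?case
  proof (cases e)
    case (Suc e')
    then have "c' e' \<le> 1"
      using Suc.IH[OF c' \<open>(\<Sum>e<M. c' e) \<le> N\<close>] Suc.prems(3) by simp
    then show ?thesis
      using shift Suc.prems(3) \<open>e = Suc e'\<close> by fastforce
  qed (simp add: h \<open>h = 0\<close>)
qed

lemma pow2_mask_weights_le_1:
  fixes x f :: "'a \<Rightarrow> nat"
  assumes "finite S" "(\<Sum>p\<in>S. x p * 2 ^ f p) = 2 ^ N - 1" "(\<Sum>p\<in>S. x p) \<le> N" "p \<in> S"
  shows "x p \<le> 1"
proof -
  define M where "M = Suc (\<Sum>q\<in>S. f q)"
  define c where "c t = (\<Sum>q\<in>{q\<in>S. f q = t}. x q)" for t
  have range: "f ` S \<subseteq> {..<M}"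
    using assms(1) by (auto simp: M_def less_Suc_eq_le intro: member_le_sum)
  have "(\<Sum>t<M. c t * 2 ^ t) = (\<Sum>t<M. \<Sum>q\<in>{q\<in>S. f q = t}. x q * 2 ^ f q)"
    unfolding c_def by (intro sum.cong) (auto simp: sum_distrib_right)
  also have "\<dots> = 2 ^ N - 1"
    unfolding assms(2)[symmetric] by (rule sum.group[OF assms(1) _ range]) simp
  moreover have "(\<Sum>t<M. c t) \<le> N"
    using sum.group[OF assms(1) _ range, of x] assms(3) unfolding c_def by simp
  ultimately have "c (f p) \<le> 1"
    using range assms(4) by (intro pow2_mask_terms_le_1) auto
  moreover have "x p \<le> c (f p)"
    unfolding c_def using assms(1,4) by (intro member_le_sum) auto
  ultimately show ?thesis
    by simp
qed

section \<open>Linear forms given by coefficient lists\<close>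

definition lin_form :: "(nat \<times> nat) list \<Rightarrow> (nat \<Rightarrow> nat) \<Rightarrow> nat" where
  "lin_form ts p = (\<Sum>(c, i)\<leftarrow>ts. c * p i)"

definition lin_coeff :: "(nat \<times> nat) list \<Rightarrow> nat \<Rightarrow> nat" where
  "lin_coeff ts i = (\<Sum>(c, j)\<leftarrow>ts. if j = i then c else 0)"

lemma lin_form_Nil [simp]: "lin_form [] p = 0"
  and lin_form_Cons [simp]: "lin_form ((c, i) # ts) p = c * p i + lin_form ts p"
  by (simp_all add: lin_form_def)

lemma lin_form_eq_sum_coeff:
  assumes "\<forall>(c, j)\<in>set ts. j < m"
  shows "lin_form ts p = (\<Sum>i<m. lin_coeff ts i * p i)"
  using assms
proof (induction ts)
  case (Cons t ts)
  obtain c j where t: "t = (c, j)"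
    by fastforce
  have "(\<Sum>i<m. (if j = i then c else 0) * p i) = c * p j"
    using Cons.prems t by (simp add: if_distrib[of "\<lambda>a. a * _"] cong: if_cong)
  with Cons show ?case
    by (simp add: t lin_coeff_def lin_form_def distrib_right sum.distrib)
qed (simp add: lin_coeff_def)

lemma lin_form_mono:
  assumes "\<forall>(c, i)\<in>set ts. p i \<le> q i"
  shows "lin_form ts p \<le> lin_form ts q"
  using assms by (induction ts) (auto intro!: add_mono mult_left_mono)

lemma lin_coeff_pos:
  assumes "(c, i) \<in> set ts" "0 < c"
  shows "0 < lin_coeff ts i"
  using assms by (induction ts) (auto simp: lin_coeff_def)

section \<open>The configuration ILP\<close>

lemma ilp_feasible_config_le_amount:
  assumes "ilp_feasible d s a C x" "p \<in> supp x" "i < d"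
  shows "p i \<le> a i"
proof -
  have "p i \<le> x p * p i"
    using assms(2) by (simp add: supp_def)
  also have "\<dots> \<le> (\<Sum>q\<in>supp x. x q * q i)"
    using assms(1,2) by (intro member_le_sum) (auto simp: ilp_feasible_def)
  finally show ?thesis
    using assms(1,3) by (simp add: ilp_feasible_def)
qed

lemma ilp_feasible_volume:
  assumes "ilp_feasible d s a C x"
  shows "(\<Sum>i<d. s i * a i) = (\<Sum>p\<in>supp x. x p * (\<Sum>i<d. s i * p i))"
proof -
  have "(\<Sum>i<d. s i * a i) = (\<Sum>i<d. \<Sum>p\<in>supp x. s i * (x p * p i))"
    using assms by (intro sum.cong) (auto simp: ilp_feasible_def sum_distrib_left[symmetric])
  also have "\<dots> = (\<Sum>p\<in>supp x. x p * (\<Sum>i<d. s i * p i))"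
    by (subst sum.swap) (simp add: sum_distrib_left mult_ac)
  finally show ?thesis .
qed

lemma ilp_optimal_exists:
  assumes "ilp_feasible d s a C x"
  shows "\<exists>y. ilp_optimal d s a C y"
  using ex_has_least_nat[of "ilp_feasible d s a C" x ilp_value] assms
  by (auto simp: ilp_optimal_def)

lemma ilp_optimal_fills_bins:
  assumes x0: "ilp_feasible d s a C x0" "\<forall>p\<in>supp x0. (\<Sum>i<d. s i * p i) = C"
    and "0 < C" and opt: "ilp_optimal d s a C x"
  shows "ilp_value x = ilp_value x0" and "\<forall>p\<in>supp x. (\<Sum>i<d. s i * p i) = C"
proof -
  define size where "size p = (\<Sum>i<d. s i * p i)" for p
  have volume: "(\<Sum>i<d. s i * a i) = ilp_value x0 * C"
    using ilp_feasible_volume[OF x0(1)] x0(2) by (simp add: ilp_value_def sum_distrib_right)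
  have feasible: "ilp_feasible d s a C x" and "ilp_value x \<le> ilp_value x0"
    using opt x0 by (auto simp: ilp_optimal_def)
  have fin: "finite (supp x)" and fits: "\<forall>p\<in>supp x. size p \<le> C"
    using feasible by (auto simp: ilp_feasible_def is_config_def size_def)
  have used: "(\<Sum>p\<in>supp x. x p * size p) = ilp_value x0 * C"
    using ilp_feasible_volume[OF feasible] volume by (simp add: size_def)
  have available: "(\<Sum>p\<in>supp x. x p * C) = ilp_value x * C"
    by (simp add: ilp_value_def sum_distrib_right)
  have "(\<Sum>p\<in>supp x. x p * size p) \<le> (\<Sum>p\<in>supp x. x p * C)"
    using fits by (intro sum_mono) simp
  then show bins: "ilp_value x = ilp_value x0"
    using used available \<open>ilp_value x \<le> ilp_value x0\<close> \<open>0 < C\<close> by simp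
  have "(\<Sum>p\<in>supp x. x p * C - x p * size p) = (\<Sum>p\<in>supp x. x p * C) - (\<Sum>p\<in>supp x. x p * size p)"
    using fits by (intro sum_subtractf_nat) simp
  also have "\<dots> = 0"
    using used available bins by simp
  finally have "\<forall>p\<in>supp x. x p * C \<le> x p * size p"
    using fin by simp
  then show "\<forall>p\<in>supp x. size p = C"
    using fits by (auto simp: supp_def intro: antisym)
qed

section \<open>An exponentiation gadget\<close>

(* Level j uses the variables y(j) = 7j, y'(j) = 7j+1, the bit b(j) = 7j+2 and its complement
   7j+3, and the slacks 7j+4, 7j+5, 7j+6; 2^2^n serves as the big-M constant. *)
definition gadget_level_rows :: "nat \<Rightarrow> nat \<Rightarrow> (nat \<times> nat) list list" where
  "gadget_level_rows n j =
    [[(1, 7*j+2), (1, 7*j+3)],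
     [(1, 7*j), (1, 7*j+4), (2^2^n, 7*j+3)],
     [(1, 7*j+1), (1, 7*j+5), (2^2^n, 7*j+2)],
     [(1, 7*j+1), (2^2^j, 7*j), (1, 7*j+6)],
     [(1, 7*(j+1)), (1, 7*(j+1)+1), (1, 7*j+6)]]"

definition gadget_row :: "nat \<Rightarrow> nat \<Rightarrow> (nat \<times> nat) list" where
  "gadget_row n k = (if k < 5*n then gadget_level_rows n (k div 5) ! (k mod 5) else [(1, 0), (1, 1)])"

definition gadget_rhs :: "nat \<Rightarrow> nat \<Rightarrow> nat" where
  "gadget_rhs n k = (if k mod 5 = 0 then 1 else 2^2^n)"

definition gadget_system :: "nat \<Rightarrow> (nat \<Rightarrow> nat) \<Rightarrow> bool" where
  "gadget_system n p \<longleftrightarrow> (\<forall>k<5*n+1. lin_form (gadget_row n k) p = gadget_rhs n k)"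

lemma less_5n_Suc_iff:
  fixes k n :: nat
  shows "k < 5*n+1 \<longleftrightarrow> k = 5*n \<or> (\<exists>j<n. \<exists>r<5. k = 5*j+r)"
proof
  assume "k < 5*n+1"
  then show "k = 5*n \<or> (\<exists>j<n. \<exists>r<5. k = 5*j+r)"
  proof (cases "k = 5*n")
    case False
    then have "k div 5 < n" "k = 5 * (k div 5) + k mod 5"
      using \<open>k < 5*n+1\<close> by auto
    then show ?thesis
      by (metis mod_less_divisor zero_less_numeral)
  qed simp
qed auto

lemma gadget_row_level:
  assumes "j < n" "r < 5"
  shows "gadget_row n (5*j+r) = gadget_level_rows n j ! r"
    and "gadget_rhs n (5*j+r) = (if r = 0 then 1 else 2^2^n)"
  using assms by (auto simp: gadget_row_def gadget_rhs_def)

lemma gadget_row_indices: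
  assumes "k < 5*n+1" "(c, i) \<in> set (gadget_row n k)"
  shows "i < 7*n+2"
proof -
  consider "k = 5*n" | j r where "j < n" "r < 5" "k = 5*j+r"
    using assms(1) less_5n_Suc_iff by blast
  then show ?thesis
  proof cases
    case 1
    then show ?thesis
      using assms(2) by (auto simp: gadget_row_def)
  next
    case (2 j r)
    then have "r \<in> {0, 1, 2, 3, 4}"
      by auto
    then show ?thesis
      using assms(2) 2 by (auto simp: gadget_row_level gadget_level_rows_def)
  qed
qed

lemma gadget_row_coeff_le_rhs:
  assumes "k < 5*n+1"
  shows "lin_coeff (gadget_row n k) i \<le> gadget_rhs n k"
proof -
  consider "k = 5*n" | j r where "j < n" "r < 5" "k = 5*j+r"
    using assms(1) less_5n_Suc_iff by blast
  then show ?thesis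
  proof cases
    case 1
    then show ?thesis
      by (auto simp: gadget_row_def gadget_rhs_def lin_coeff_def)
  next
    case (2 j r)
    have "(2::nat)^2^j \<le> 2^2^n"
      using \<open>j < n\<close> by (simp add: power_increasing)
    moreover have "r \<in> {0, 1, 2, 3, 4}"
      using 2 by auto
    ultimately show ?thesis
      using 2 by (auto simp: gadget_row_level gadget_level_rows_def lin_coeff_def)
  qed
qed

lemma gadget_row_covers:
  assumes "i < 7*n+2"
  shows "\<exists>k<5*n+1. \<exists>c>0. (c, i) \<in> set (gadget_row n k)"
proof -
  obtain j r where i: "i = 7*j + r" "r < 7"
    by (metis div_mult_mod_eq mod_less_divisor mult.commute zero_less_numeral)
  consider "r < 2" "j = 0" | j' where "r < 2" "j = Suc j'" | "2 \<le> r"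
    by (metis not0_implies_Suc not_less)
  then show ?thesis
  proof cases
    case 1
    then show ?thesis
      using i by (intro exI[of _ "5*n"]) (auto simp: gadget_row_def less_2_cases_iff)
  next
    case (2 j')
    then have "j' < n" "gadget_row n (5*j'+4) = gadget_level_rows n j' ! 4"
      using assms i by (auto intro: gadget_row_level)
    then show ?thesis
      using 2 i by (intro exI[of _ "5*j'+4"]) (auto simp: gadget_level_rows_def less_2_cases_iff)
  next
    case 3
    then have "j < n" "r \<in> {2, 3, 4, 5, 6}"
      using assms i by auto
    define r' :: nat where "r' = [0, 0, 0, 0, 1, 2, 3] ! r"
    have "r' < 5"
      using \<open>r \<in> {2, 3, 4, 5, 6}\<close> by (auto simp: r'_def)
    with \<open>j < n\<close> have "5*j + r' < 5*n+1" "gadget_row n (5*j + r') = gadget_level_rows n j ! r'"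
      by (auto intro: gadget_row_level)
    then show ?thesis
      using i \<open>r \<in> {2, 3, 4, 5, 6}\<close> by (intro exI[of _ "5*j + r'"]) (auto simp: r'_def gadget_level_rows_def)
  qed
qed

lemma gadget_system_iff:
  fixes n :: nat
  defines "M \<equiv> 2^2^n"
  shows "gadget_system n p \<longleftrightarrow> p 0 + p 1 = 1 \<and>
    (\<forall>j<n. p (7*j+2) + p (7*j+3) = 1 \<and>
           p (7*j) + p (7*j+4) + M * p (7*j+3) = M \<and>
           p (7*j+1) + p (7*j+5) + M * p (7*j+2) = M \<and>
           p (7*j+1) + 2^2^j * p (7*j) + p (7*j+6) = M \<and>
           p (7*(j+1)) + p (7*(j+1)+1) + p (7*j+6) = M)"
  (is "_ \<longleftrightarrow> ?last \<and> (\<forall>j<n. ?level j)")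
proof -
  have row: "lin_form (gadget_row n (5*j+r)) p = gadget_rhs n (5*j+r) \<longleftrightarrow>
      [p (7*j+2) + p (7*j+3) = 1,
       p (7*j) + p (7*j+4) + M * p (7*j+3) = M,
       p (7*j+1) + p (7*j+5) + M * p (7*j+2) = M,
       p (7*j+1) + 2^2^j * p (7*j) + p (7*j+6) = M,
       p (7*(j+1)) + p (7*(j+1)+1) + p (7*j+6) = M] ! r" if "j < n" "r < 5" for j r
    using that gadget_row_level[OF that]
    by (auto simp: M_def gadget_level_rows_def add.assoc nth_Cons split: nat.split)
  have last: "lin_form (gadget_row n (5*n)) p = gadget_rhs n (5*n) \<longleftrightarrow> ?last"
    by (simp add: gadget_row_def gadget_rhs_def)
  have level: "?level j \<longleftrightarrow> (\<forall>r<5. lin_form (gadget_row n (5*j+r)) p = gadget_rhs n (5*j+r))"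
    if "j < n" for j
  proof -
    have "(\<forall>r<5. P r) \<longleftrightarrow> P 0 \<and> P 1 \<and> P 2 \<and> P 3 \<and> P (4::nat)" for P
      by (auto simp: less_Suc_eq numeral_eq_Suc)
    then show ?thesis
      using row[OF that] by simp
  qed
  have split: "(\<forall>k<5*n+1. P k) \<longleftrightarrow> P (5*n) \<and> (\<forall>j<n. \<forall>r<5. P (5*j+r))" for P
    unfolding less_5n_Suc_iff by blast
  show ?thesis
    unfolding gadget_system_def split
    using level last by simp
qed

lemma gadget_level_forces:
  fixes b b' y y' s s' t z M K :: nat
  assumes "b + b' = 1" "y + s + M * b' = M" "y' + s' + M * b = M" "y' + K * y + t = M"
    and "z + t = M"
  shows "z = (y + y') * K ^ b"
proof -
  consider "b = 0" "b' = 1" | "b = 1" "b' = 0"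
    using assms(1) by linarith
  then show ?thesis
  proof cases
    case 1
    then have "y = 0"
      using assms(2) by simp
    then show ?thesis
      using 1 assms(4,5) by simp
  next
    case 2
    then have "y' = 0"
      using assms(3) by simp
    then show ?thesis
      using 2 assms(4,5) by (simp add: mult.commute)
  qed
qed

lemma gadget_system_forces_power:
  assumes "gadget_system n p"
  shows "p (7*n) + p (7*n+1) = 2 ^ (\<Sum>j<n. p (7*j+2) * 2^j)"
proof -
  have step: "p (7*(j+1)) + p (7*(j+1)+1) = (p (7*j) + p (7*j+1)) * 2 ^ (p (7*j+2) * 2^j)"
    if "j < n" for j
  proof -
    have "p (7*j+2) + p (7*j+3) = 1"
      and "p (7*j) + p (7*j+4) + 2^2^n * p (7*j+3) = 2^2^n"
      and "p (7*j+1) + p (7*j+5) + 2^2^n * p (7*j+2) = 2^2^n"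
      and "p (7*j+1) + 2^2^j * p (7*j) + p (7*j+6) = 2^2^n"
      and "p (7*(j+1)) + p (7*(j+1)+1) + p (7*j+6) = 2^2^n"
      using assms that unfolding gadget_system_iff by blast+
    from gadget_level_forces[OF this] show ?thesis
      by (simp add: power_mult[symmetric] mult.commute)
  qed
  have "p (7*j) + p (7*j+1) = 2 ^ (\<Sum>i<j. p (7*i+2) * 2^i)" if "j \<le> n" for j
    using that
  proof (induction j)
    case 0
    then show ?case
      using assms by (simp add: gadget_system_iff)
  next
    case (Suc j)
    then show ?case
      using step[of j] by (simp add: power_add)
  qed
  then show ?thesis
    by simp
qed

(* The solution for v: b(j) is bit j of v and z(j) = 2^(v mod 2^j) sits in y(j) or in y'(j)
   according to b(j). *)
definition gadget_level_values :: "nat \<Rightarrow> nat \<Rightarrow> nat \<Rightarrow> nat list" where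
  "gadget_level_values n v j =
    (let b = v div 2^j mod 2; z = 2 ^ (v mod 2^j); M = 2^2^n
     in [b * z, (1 - b) * z, b, 1 - b, b * (M - z), (1 - b) * (M - z), M - 2 ^ (v mod 2^(j+1))])"

definition gadget_solution :: "nat \<Rightarrow> nat \<Rightarrow> nat \<Rightarrow> nat" where
  "gadget_solution n v i = (if i < 7*n+2 then gadget_level_values n v (i div 7) ! (i mod 7) else 0)"

lemma gadget_solution_level:
  assumes "r < 7" "7*j+r < 7*n+2"
  shows "gadget_solution n v (7*j+r) = gadget_level_values n v j ! r"
  using assms by (simp add: gadget_solution_def)

lemma gadget_solution_level_sum:
  assumes "j \<le> n"
  shows "gadget_solution n v (7*j) + gadget_solution n v (7*j+1) = 2 ^ (v mod 2^j)"
proof -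
  have "v div 2^j mod 2 * z + (1 - v div 2^j mod 2) * z = z" for z :: nat
    by (cases "v div 2^j mod 2 = 0") (auto simp: mod2_eq_if)
  then show ?thesis
    using assms gadget_solution_level[of 0 j n v] gadget_solution_level[of 1 j n v]
    by (simp add: gadget_level_values_def Let_def)
qed

lemma gadget_solution_solves: "gadget_system n (gadget_solution n v)"
  unfolding gadget_system_iff
proof (intro conjI allI impI)
  show "gadget_solution n v 0 + gadget_solution n v 1 = 1"
    using gadget_solution_level_sum[of 0 n v] by simp
next
  fix j assume "j < n"
  let ?M = "(2::nat)^2^n" and ?p = "gadget_solution n v"
  define b where "b = v div 2^j mod 2"
  define z :: nat where "z = 2 ^ (v mod 2^j)"
  have level: "?p (7*j+r) = [b*z, (1-b)*z, b, 1-b, b*(?M-z), (1-b)*(?M-z), ?M - z * (2^2^j)^b] ! r"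
    if "r < 7" for r
    using gadget_solution_level[OF that, of j n v] \<open>j < n\<close> that
    by (simp add: gadget_level_values_def Let_def b_def z_def pow2_mod_double_pow2)
  have "z \<le> ?M" "z * (2^2^j)^b \<le> ?M"
    using pow2_mod_pow2_le[of j n v] pow2_mod_pow2_le[of "j+1" n v] \<open>j < n\<close>
    by (simp_all add: z_def b_def pow2_mod_double_pow2)
  moreover have "?p (7*(j+1)) + ?p (7*(j+1)+1) = z * (2^2^j)^b"
    using gadget_solution_level_sum[of "j+1" n v] \<open>j < n\<close>
    by (simp add: z_def b_def pow2_mod_double_pow2)
  moreover have "b = 0 \<or> b = 1"
    by (auto simp: b_def)
  ultimately show "?p (7*j+2) + ?p (7*j+3) = 1"
    and "?p (7*j) + ?p (7*j+4) + ?M * ?p (7*j+3) = ?M"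
    and "?p (7*j+1) + ?p (7*j+5) + ?M * ?p (7*j+2) = ?M"
    and "?p (7*j+1) + 2^2^j * ?p (7*j) + ?p (7*j+6) = ?M"
    and "?p (7*(j+1)) + ?p (7*(j+1)+1) + ?p (7*j+6) = ?M"
    using level[of 0] level[of 1] level[of 2] level[of 3] level[of 4] level[of 5] level[of 6]
    by auto
qed

lemma gadget_solution_vanishes: "7*n+2 \<le> i \<Longrightarrow> gadget_solution n v i = 0"
  by (simp add: gadget_solution_def)

lemma gadget_solution_inj: "inj_on (gadget_solution n) {..<2^n}"
proof (rule inj_onI)
  fix v w assume "v \<in> {..<2^n}" "w \<in> {..<2^n}" "gadget_solution n v = gadget_solution n w"
  then have "(2::nat) ^ v = 2 ^ w"
    using gadget_solution_level_sum[of n n v] gadget_solution_level_sum[of n n w] by simp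
  then show "v = w"
    by simp
qed

section \<open>The hard instance\<close>

definition hard_amount :: "nat \<Rightarrow> nat \<Rightarrow> nat" where
  "hard_amount n i = (\<Sum>v<2^n. gadget_solution n v i)"

(* B exceeds every right-hand side and every row value at the amount vector, so no carries
   occur between the base-B digits of a configuration below the amounts. *)
definition hard_base :: "nat \<Rightarrow> nat" where
  "hard_base n = Suc (\<Sum>k<5*n+1. gadget_rhs n k + lin_form (gadget_row n k) (hard_amount n))"

definition hard_size :: "nat \<Rightarrow> nat \<Rightarrow> nat" where
  "hard_size n i =
    (if i < 7*n+2 then (\<Sum>k<5*n+1. lin_coeff (gadget_row n k) i * hard_base n ^ k) else 1)"

definition hard_capacity :: "nat \<Rightarrow> nat" where
  "hard_capacity n = (\<Sum>k<5*n+1. gadget_rhs n k * hard_base n ^ k)"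

lemma hard_size_sum:
  assumes "\<forall>i\<ge>7*n+2. p i = 0"
  shows "(\<Sum>i<12*n+4. hard_size n i * p i) = (\<Sum>k<5*n+1. lin_form (gadget_row n k) p * hard_base n ^ k)"
proof -
  have "(\<Sum>i<12*n+4. hard_size n i * p i) = (\<Sum>i<7*n+2. hard_size n i * p i)"
    using assms by (intro sum.mono_neutral_right) auto
  also have "\<dots> = (\<Sum>i<7*n+2. \<Sum>k<5*n+1. lin_coeff (gadget_row n k) i * hard_base n ^ k * p i)"
    by (intro sum.cong) (simp_all add: hard_size_def sum_distrib_right del: sum.lessThan_Suc)
  also have "\<dots> = (\<Sum>k<5*n+1. (\<Sum>i<7*n+2. lin_coeff (gadget_row n k) i * p i) * hard_base n ^ k)"
    by (subst sum.swap) (simp add: sum_distrib_left sum_distrib_right mult_ac del: sum.lessThan_Suc)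
  also have "\<dots> = (\<Sum>k<5*n+1. lin_form (gadget_row n k) p * hard_base n ^ k)"
    using gadget_row_indices by (intro sum.cong refl) (subst lin_form_eq_sum_coeff; fastforce)
  finally show ?thesis .
qed

lemma hard_size_eq_capacity_iff:
  assumes "\<forall>i\<ge>7*n+2. p i = 0" "\<forall>i. p i \<le> hard_amount n i"
  shows "(\<Sum>i<12*n+4. hard_size n i * p i) = hard_capacity n \<longleftrightarrow> gadget_system n p"
proof -
  have digits: "\<forall>k<5*n+1. lin_form (gadget_row n k) p < hard_base n"
    "\<forall>k<5*n+1. gadget_rhs n k < hard_base n"
  proof (safe)
    fix k assume "k < 5*n+1"
    have "lin_form (gadget_row n k) p \<le> lin_form (gadget_row n k) (hard_amount n)"
      using assms(2) by (intro lin_form_mono) auto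
    moreover have "gadget_rhs n k + lin_form (gadget_row n k) (hard_amount n) < hard_base n"
      unfolding hard_base_def less_Suc_eq_le using \<open>k < 5*n+1\<close>
      by (intro member_le_sum[of k "{..<5*n+1}" "\<lambda>k. gadget_rhs n k + _ k"]) auto
    ultimately show "lin_form (gadget_row n k) p < hard_base n" "gadget_rhs n k < hard_base n"
      by linarith+
  qed
  show ?thesis
    unfolding hard_size_sum[OF assms(1)] hard_capacity_def gadget_system_def
    using base_expansion_inject[OF digits] by (auto intro: sum.cong simp del: sum.lessThan_Suc)
qed

lemma hard_amount_vanishes: "7*n+2 \<le> i \<Longrightarrow> hard_amount n i = 0"
  by (simp add: hard_amount_def gadget_solution_vanishes)

lemma gadget_solution_le_hard_amount: "v < 2^n \<Longrightarrow> gadget_solution n v i \<le> hard_amount n i"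
  unfolding hard_amount_def by (rule member_le_sum) auto

lemma hard_perfect_packing:
  fixes n :: nat
  defines "x0 \<equiv> \<lambda>p. if p \<in> gadget_solution n ` {..<2^n} then 1 else 0"
  shows "ilp_feasible (12*n+4) (hard_size n) (hard_amount n) (hard_capacity n) x0"
    and "ilp_value x0 = 2^n"
    and "\<forall>p\<in>supp x0. (\<Sum>i<12*n+4. hard_size n i * p i) = hard_capacity n"
proof -
  have supp: "supp x0 = gadget_solution n ` {..<2^n}"
    by (auto simp: supp_def x0_def)
  have "(\<Sum>i<12*n+4. hard_size n i * gadget_solution n v i) = hard_capacity n" if "v < 2^n" for v
    using hard_size_eq_capacity_iff[of n "gadget_solution n v"] gadget_solution_solves
      gadget_solution_vanishes gadget_solution_le_hard_amount[OF that] by simp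
  then show full: "\<forall>p\<in>supp x0. (\<Sum>i<12*n+4. hard_size n i * p i) = hard_capacity n"
    unfolding supp by auto
  have "\<forall>p\<in>supp x0. is_config (12*n+4) (hard_size n) (hard_capacity n) p"
    using full unfolding supp is_config_def by (auto simp: gadget_solution_vanishes)
  moreover have "(\<Sum>p\<in>supp x0. x0 p * p i) = hard_amount n i" for i
  proof -
    have "(\<Sum>p\<in>supp x0. x0 p * p i) = (\<Sum>p\<in>gadget_solution n ` {..<2^n}. p i)"
      unfolding supp by (intro sum.cong) (auto simp: x0_def)
    also have "\<dots> = hard_amount n i"
      unfolding hard_amount_def by (subst sum.reindex[OF gadget_solution_inj]) simp
    finally show ?thesis .
  qed
  ultimately show "ilp_feasible (12*n+4) (hard_size n) (hard_amount n) (hard_capacity n) x0"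
    by (simp add: ilp_feasible_def supp)
  have "ilp_value x0 = card (gadget_solution n ` {..<2^n})"
    unfolding ilp_value_def supp by (simp add: x0_def)
  then show "ilp_value x0 = 2^n"
    by (simp add: card_image[OF gadget_solution_inj])
qed

lemma hard_capacity_pos: "0 < hard_capacity n"
proof -
  have "0 < gadget_rhs n (5*n) * hard_base n ^ (5*n)"
    by (simp add: gadget_rhs_def hard_base_def)
  also have "\<dots> \<le> hard_capacity n"
    unfolding hard_capacity_def by (rule member_le_sum) auto
  finally show ?thesis .
qed

lemma hard_instance_valid:
  "valid_instance (12*n+4) (hard_size n) (hard_amount n) (hard_capacity n)"
  unfolding valid_instance_def
proof (intro conjI allI impI)
  fix i assume "i < 12*n+4"
  show "0 < hard_size n i"
  proof (cases "i < 7*n+2")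
    case True
    then obtain k c where "k < 5*n+1" "0 < c" "(c, i) \<in> set (gadget_row n k)"
      using gadget_row_covers by blast
    then have "0 < lin_coeff (gadget_row n k) i * hard_base n ^ k"
      by (simp add: lin_coeff_pos hard_base_def)
    also have "\<dots> \<le> (\<Sum>k<5*n+1. lin_coeff (gadget_row n k) i * hard_base n ^ k)"
      using \<open>k < 5*n+1\<close> by (intro member_le_sum) auto
    also have "\<dots> = hard_size n i"
      using True by (simp add: hard_size_def del: sum.lessThan_Suc)
    finally show ?thesis .
  qed (simp add: hard_size_def)
  show "hard_size n i \<le> hard_capacity n"
    using hard_capacity_pos[of n] gadget_row_coeff_le_rhs
    by (auto simp: hard_size_def hard_capacity_def intro!: sum_mono simp del: sum.lessThan_Suc)
next
  show "\<exists>x. ilp_optimal (12*n+4) (hard_size n) (hard_amount n) (hard_capacity n) x"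
    using hard_perfect_packing(1) by (rule ilp_optimal_exists)
qed

lemma hard_instance_optimal_support:
  assumes opt: "ilp_optimal (12*n+4) (hard_size n) (hard_amount n) (hard_capacity n) x"
  shows "card (supp x) = 2^n"
proof -
  have feasible: "ilp_feasible (12*n+4) (hard_size n) (hard_amount n) (hard_capacity n) x"
    using opt by (simp add: ilp_optimal_def)
  have bins: "ilp_value x = 2^n"
    and full: "\<forall>p\<in>supp x. (\<Sum>i<12*n+4. hard_size n i * p i) = hard_capacity n"
    using ilp_optimal_fills_bins[OF hard_perfect_packing(1,3) hard_capacity_pos opt]
    by (simp_all add: hard_perfect_packing(2))
  define e where "e p = (\<Sum>j<n. p (7*j+2) * 2^j)" for p :: "nat \<Rightarrow> nat"
  have power_of_2: "p (7*n) + p (7*n+1) = 2 ^ e p" if "p \<in> supp x" for p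
  proof -
    have "p i \<le> hard_amount n i" for i
      using ilp_feasible_config_le_amount[OF feasible that] feasible that
      by (cases "i < 12*n+4") (auto simp: ilp_feasible_def is_config_def)
    moreover have "\<forall>i\<ge>7*n+2. p i = 0"
      using calculation hard_amount_vanishes by (metis le_zero_eq)
    ultimately have "gadget_system n p"
      using full that hard_size_eq_capacity_iff by blast
    then show ?thesis
      unfolding e_def by (rule gadget_system_forces_power)
  qed
  have "(\<Sum>p\<in>supp x. x p * 2 ^ e p) = (\<Sum>p\<in>supp x. x p * p (7*n)) + (\<Sum>p\<in>supp x. x p * p (7*n+1))"
    unfolding sum.distrib[symmetric] by (intro sum.cong refl) (metis power_of_2 distrib_left)
  also have "\<dots> = hard_amount n (7*n) + hard_amount n (7*n+1)"
    using feasible by (simp add: ilp_feasible_def)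
  also have "\<dots> = (\<Sum>v<2^n. 2 ^ v)"
    using gadget_solution_level_sum[of n n] by (simp add: hard_amount_def sum.distrib[symmetric])
  also have "\<dots> = 2 ^ 2 ^ n - 1"
    by (rule sum_pow2_lessThan)
  finally have "\<forall>p\<in>supp x. x p \<le> 1"
    using pow2_mask_weights_le_1[of "supp x" x e] feasible bins
    by (auto simp: ilp_feasible_def ilp_value_def)
  then have "ilp_value x = (\<Sum>p\<in>supp x. 1)"
    unfolding ilp_value_def by (intro sum.cong) (auto simp: supp_def le_Suc_eq)
  with bins show ?thesis
    by simp
qed

lemma powr_sixteenth_le_pow2:
  assumes "1 \<le> n"
  shows "2 powr (1/16 * real (12*n+4)) \<le> 2 ^ n"
proof -
  have "2 powr (1/16 * real (12*n+4)) \<le> 2 powr real n"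
    using assms by (intro powr_mono) auto
  then show ?thesis
    by (simp add: powr_realpow)
qed

theorem theorem1:
  shows "(\<exists>c::real. c > 0 \<and>
            infinite {d::nat. \<exists>s a C. valid_instance d s a C \<and>
               (\<forall>x. ilp_optimal d s a C x \<longrightarrow> real (card (supp x)) \<ge> 2 powr (c * real d))})
       \<and> (\<forall>d'::nat. d' \<ge> 1 \<longrightarrow>
            (\<exists>s a C. valid_instance (12 * d' + 4) s a C \<and>
               (\<forall>x. ilp_optimal (12 * d' + 4) s a C x \<longrightarrow> card (supp x) \<ge> 2 ^ d' - 1)))"
proof -
  have hard: "valid_instance (12*n+4) (hard_size n) (hard_amount n) (hard_capacity n) \<and>
      (\<forall>x. ilp_optimal (12*n+4) (hard_size n) (hard_amount n) (hard_capacity n) x \<longrightarrow>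
         card (supp x) = 2^n)" for n
    using hard_instance_valid hard_instance_optimal_support by blast
  let ?D = "{d::nat. \<exists>s a C. valid_instance d s a C \<and>
      (\<forall>x. ilp_optimal d s a C x \<longrightarrow> real (card (supp x)) \<ge> 2 powr (1/16 * real d))}"
  have "12*n+4 \<in> ?D" if "1 \<le> n" for n
    using hard[of n] powr_sixteenth_le_pow2[OF that] by fastforce
  then have "(\<lambda>n. 12*n+4) ` {1..} \<subseteq> ?D"
    by auto
  moreover have "infinite ((\<lambda>n::nat. 12*n+4) ` {1..})"
    by (subst finite_image_iff) (auto simp: inj_on_def infinite_Ici)
  ultimately have "infinite ?D"
    using finite_subset by blast
  then show ?thesis
    using hard by (intro conjI exI[of _ "1/16"]) fastforce+
qed

end
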